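(* Consider $M$ access points (APs), each with $N$ antennas and $L\le N$ RF chains, and $K$ single-antenna users (UEs) with transmit powers $p_1,\dots,p_K>0$ and noise power $\sigma^2>0$. For each AP $m$ let $\mathcal{U}_m\subseteq\{1,\dots,K\}$ be the set of UEs it serves, and for each UE $k$ let $\mathcal{F}_k=\{m: k\in\mathcal{U}_m\}$. Let $\boldsymbol{h}_{m,i}\in\mathbb{C}^{N}$ be (perfectly known) channel vectors and $\boldsymbol{R}_{m,i}\in\mathbb{C}^{N\times N}$ Hermitian positive semidefinite matrices. For analog beamformers $\boldsymbol{W}=(\boldsymbol{W}_1,\dots,\boldsymbol{W}_M)$ with $\boldsymbol{W}_m\in\mathbb{C}^{N\times L}$ of full column rank, define the perfect-CSI uplink MMSE SINR of UE $k$ by $$\mathrm{SINR}_k(\boldsymbol{W})=\boldsymbol{g}_k^{*}\Big(\sum_{i\neq k}\bar{\boldsymbol{g}}_{k,i}\bar{\boldsymbol{g}}_{k,i}^{*}p_i+\boldsymbol{\Sigma}_k\Big)^{-1}\boldsymbol{g}_k,$$ where $\boldsymbol{g}_{m,i}=\boldsymbol{W}_m^{*}\boldsymbol{h}_{m,i}$, $\boldsymbol{g}_k\in\mathbb{C}^{|\mathcal{F}_k|L}$ stacks $\boldsymbol{g}_{m,k}$ over $m\in\mathcal{F}_k$, $\bar{\boldsymbol{g}}_{k,i}$ stacks $\mathbb{1}[i\in\mathcal{U}_m]\,\boldsymbol{g}_{m,i}$ over $m\in\mathcal{F}_k$, and $\boldsymbol{\Sigma}_k$ is block diagonal with blocks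 $\boldsymbol{\Sigma}_{k,m}=\sum_{i\notin\mathcal{U}_m}\boldsymbol{W}_m^{*}\boldsymbol{R}_{m,i}\boldsymbol{W}_m\,p_i+\sigma^2\boldsymbol{W}_m^{*}\boldsymbol{W}_m$, $m\in\mathcal{F}_k$. Suppose $\boldsymbol{W}_m=\boldsymbol{U}_m\boldsymbol{Q}_m$ with $\boldsymbol{U}_m\in\mathbb{C}^{N\times L}$ satisfying $\boldsymbol{U}_m^{*}\boldsymbol{U}_m=\boldsymbol{I}_L$. Then, for fixed $\boldsymbol{U}_1,\dots,\boldsymbol{U}_M$, every choice of nonsingular $\boldsymbol{Q}_m\in\mathbb{C}^{L\times L}$, $m=1,\dots,M$, yields the same value of $\mathrm{SINR}_k(\boldsymbol{W})$ (namely $\mathrm{SINR}_k(\boldsymbol{U})$), so any nonsingular $\boldsymbol{Q}=\mathrm{diag}(\boldsymbol{Q}_1,\dots,\boldsymbol{Q}_M)$ provides the maximum SINR.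
   Context: Hybrid analog-digital cell-free massive MIMO uplink. The unit-modulus constraint on the analog beamformer entries is disregarded here. "Perfect CSI" means the channel estimates equal the true channels, so the estimation error covariance is zero; the factorization $\boldsymbol{W}=\boldsymbol{U}\boldsymbol{Q}$ (with $\boldsymbol{U}=\mathrm{diag}(\boldsymbol{U}_m)$ semi-unitary, $\boldsymbol{Q}=\mathrm{diag}(\boldsymbol{Q}_m)$) arises from an SVD of $\boldsymbol{W}$. *)

theory Defs
  imports "HOL-Analysis.Analysis" "Jordan_Normal_Form.Gauss_Jordan_Elimination"
begin

text \<open>Index conventions: APs are 0..M-1, UEs are 0..K-1 (0-based).
  Matrices/vectors are Jordan_Normal_Form matrices over complex.\<close>

definition ctrans :: "complex mat \<Rightarrow> complex mat" where
  "ctrans A = mat (dim_col A) (dim_row A) (\<lambda>(i,j). cnj (A $$ (j,i)))"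

definition outer :: "complex vec \<Rightarrow> complex mat" where
  "outer v = mat (dim_vec v) (dim_vec v) (\<lambda>(i,j). v $ i * cnj (v $ j))"

definition minv :: "complex mat \<Rightarrow> complex mat" where
  "minv A = (case mat_inverse A of Some B \<Rightarrow> B | None \<Rightarrow> 0\<^sub>m (dim_row A) (dim_col A))"

definition msum :: "nat \<Rightarrow> nat \<Rightarrow> (nat \<Rightarrow> complex mat) \<Rightarrow> nat set \<Rightarrow> complex mat" where
  "msum r c f I = mat r c (\<lambda>ij. \<Sum>i\<in>I. f i $$ ij)"

definition herm_psd :: "nat \<Rightarrow> complex mat \<Rightarrow> bool" where
  "herm_psd n A \<longleftrightarrow> A \<in> carrier_mat n n \<and> ctrans A = A \<and>
     (\<forall>v \<in> carrier_vec n. 0 \<le> Re (conjugate v \<bullet> (A *\<^sub>v v)))"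

definition full_col_rank :: "complex mat \<Rightarrow> bool" where
  "full_col_rank A \<longleftrightarrow> (\<forall>v \<in> carrier_vec (dim_col A). A *\<^sub>v v = 0\<^sub>v (dim_row A) \<longrightarrow> v = 0\<^sub>v (dim_col A))"

definition serving :: "nat \<Rightarrow> (nat \<Rightarrow> nat set) \<Rightarrow> nat \<Rightarrow> nat list" where
  "serving M Us k = sorted_list_of_set {m. m < M \<and> k \<in> Us m}"

definition geff :: "(nat \<Rightarrow> complex mat) \<Rightarrow> (nat \<Rightarrow> nat \<Rightarrow> complex vec) \<Rightarrow> nat \<Rightarrow> nat \<Rightarrow> complex vec" where
  "geff W h m i = ctrans (W m) *\<^sub>v h m i"

definition gstack :: "nat \<Rightarrow> nat \<Rightarrow> (nat \<Rightarrow> nat set) \<Rightarrow> (nat \<Rightarrow> complex mat) \<Rightarrow> (nat \<Rightarrow> nat \<Rightarrow> complex vec) \<Rightarrow> nat \<Rightarrow> complex vec" where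
  "gstack M L Us W h k = (let fs = serving M Us k in
     vec (length fs * L) (\<lambda>j. geff W h (fs ! (j div L)) k $ (j mod L)))"

definition gbar :: "nat \<Rightarrow> nat \<Rightarrow> (nat \<Rightarrow> nat set) \<Rightarrow> (nat \<Rightarrow> complex mat) \<Rightarrow> (nat \<Rightarrow> nat \<Rightarrow> complex vec) \<Rightarrow> nat \<Rightarrow> nat \<Rightarrow> complex vec" where
  "gbar M L Us W h k i = (let fs = serving M Us k in
     vec (length fs * L) (\<lambda>j. if i \<in> Us (fs ! (j div L)) then geff W h (fs ! (j div L)) i $ (j mod L) else 0))"

definition sigblk :: "nat \<Rightarrow> nat \<Rightarrow> (nat \<Rightarrow> nat set) \<Rightarrow> (nat \<Rightarrow> complex mat) \<Rightarrow> (nat \<Rightarrow> nat \<Rightarrow> complex mat) \<Rightarrow> (nat \<Rightarrow> real) \<Rightarrow> real \<Rightarrow> nat \<Rightarrow> complex mat" where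
  "sigblk K L Us W R p \<sigma>2 m =
     msum (dim_col (W m)) (dim_col (W m)) (\<lambda>i. complex_of_real (p i) \<cdot>\<^sub>m (ctrans (W m) * R m i * W m)) {i. i < K \<and> i \<notin> Us m}
     + complex_of_real \<sigma>2 \<cdot>\<^sub>m (ctrans (W m) * W m)"

definition sigma_k :: "nat \<Rightarrow> nat \<Rightarrow> nat \<Rightarrow> (nat \<Rightarrow> nat set) \<Rightarrow> (nat \<Rightarrow> complex mat) \<Rightarrow> (nat \<Rightarrow> nat \<Rightarrow> complex mat) \<Rightarrow> (nat \<Rightarrow> real) \<Rightarrow> real \<Rightarrow> nat \<Rightarrow> complex mat" where
  "sigma_k M K L Us W R p \<sigma>2 k = (let fs = serving M Us k in
     mat (length fs * L) (length fs * L) (\<lambda>(a,b).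
       if a div L = b div L then sigblk K L Us W R p \<sigma>2 (fs ! (a div L)) $$ (a mod L, b mod L) else 0))"

definition SINR :: "nat \<Rightarrow> nat \<Rightarrow> nat \<Rightarrow> (nat \<Rightarrow> nat set) \<Rightarrow> (nat \<Rightarrow> nat \<Rightarrow> complex vec) \<Rightarrow> (nat \<Rightarrow> nat \<Rightarrow> complex mat) \<Rightarrow> (nat \<Rightarrow> real) \<Rightarrow> real \<Rightarrow> (nat \<Rightarrow> complex mat) \<Rightarrow> nat \<Rightarrow> complex" where
  "SINR M K L Us h R p \<sigma>2 W k = (let
     g = gstack M L Us W h k;
     n = dim_vec g;
     C = msum n n (\<lambda>i. complex_of_real (p i) \<cdot>\<^sub>m outer (gbar M L Us W h k i)) {i. i < K \<and> i \<noteq> k}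
         + sigma_k M K L Us W R p \<sigma>2 k
   in conjugate g \<bullet> (minv C *\<^sub>v g))"

end

theory Submission
  imports Defs "Jordan_Normal_Form.Determinant"
begin

(* Replacing W_m by W_m Q_m multiplies every effective channel g_{m,i} = W_m^* h_{m,i} by Q_m^* and
   turns every noise block Sigma_{k,m} into Q_m^* Sigma_{k,m} Q_m.  With D = diag(Q_m, m in F_k), the
   stacked vectors become D^* g and the matrix C inverted in the MMSE SINR becomes the congruence
   D^* C D.  Since (D^* C D)^-1 = D^-1 C^-1 D^-*, the quadratic form g^* C^-1 g is unchanged. *)

lemma ctrans_dims [simp]: "dim_row (ctrans A) = dim_col A" "dim_col (ctrans A) = dim_row A"
  by (auto simp: ctrans_def)

lemma ctrans_carrier [simp, intro]: "A \<in> carrier_mat r c \<Longrightarrow> ctrans A \<in> carrier_mat c r"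
  by (auto simp: ctrans_def)

lemma index_ctrans [simp]:
  "i < dim_col A \<Longrightarrow> j < dim_row A \<Longrightarrow> ctrans A $$ (i, j) = cnj (A $$ (j, i))"
  by (auto simp: ctrans_def)

lemma ctrans_ctrans [simp]: "ctrans (ctrans A) = A"
  by (rule eq_matI) auto

lemma ctrans_one [simp]: "ctrans (1\<^sub>m n) = 1\<^sub>m n"
  by (rule eq_matI) auto

lemma ctrans_mult: "dim_col A = dim_row B \<Longrightarrow> ctrans (A * B) = ctrans B * ctrans A"
  by (rule eq_matI) (auto simp: scalar_prod_def ctrans_def intro!: sum.cong)

lemma scalar_prod_conjugate_mult_mat_vec:
  assumes A: "A \<in> carrier_mat r c" and x: "x \<in> carrier_vec c" and y: "y \<in> carrier_vec r"
  shows "conjugate (A *\<^sub>v x) \<bullet> y = conjugate x \<bullet> (ctrans A *\<^sub>v y)"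
proof -
  have "conjugate (A *\<^sub>v x) \<bullet> y = (\<Sum>i<r. \<Sum>j<c. cnj (A $$ (i, j)) * cnj (x $ j) * y $ i)"
    using A x y by (auto simp: scalar_prod_def atLeast0LessThan sum_distrib_right cnj_sum intro!: sum.cong)
  also have "\<dots> = (\<Sum>j<c. \<Sum>i<r. cnj (A $$ (i, j)) * cnj (x $ j) * y $ i)"
    by (rule sum.swap)
  also have "\<dots> = conjugate x \<bullet> (ctrans A *\<^sub>v y)"
    using A x y by (auto simp: scalar_prod_def atLeast0LessThan sum_distrib_left intro!: sum.cong)
  finally show ?thesis .
qed

lemma assoc_mult_mat_dims:
  "dim_col A = dim_row B \<Longrightarrow> dim_col B = dim_row C \<Longrightarrow> A * B * C = A * (B * C)"
  by (rule assoc_mult_mat[OF carrier_matI carrier_matI carrier_matI]) auto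

lemma assoc_mult_mat_vec_dims:
  "dim_col A = dim_row B \<Longrightarrow> dim_col B = dim_vec v \<Longrightarrow> (A * B) *\<^sub>v v = A *\<^sub>v (B *\<^sub>v v)"
  by (rule assoc_mult_mat_vec[OF carrier_matI carrier_matI carrier_vecI]) auto

lemma mult_mat_vec_zero [simp]: "A \<in> carrier_mat m n \<Longrightarrow> A *\<^sub>v 0\<^sub>v n = 0\<^sub>v m"
  by (rule eq_vecI) auto

lemma ctrans_mult_sandwich:
  assumes "W \<in> carrier_mat N L" "Q \<in> carrier_mat L L'" "X \<in> carrier_mat N N"
  shows "ctrans (W * Q) * X * (W * Q) = ctrans Q * (ctrans W * X * W) * Q"
  using assms by (simp add: ctrans_mult assoc_mult_mat_dims)

definition col_mat :: "complex vec \<Rightarrow> complex mat" where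
  "col_mat w = mat (dim_vec w) 1 (\<lambda>(i, j). w $ i)"

lemma col_mat_dims [simp]: "dim_row (col_mat w) = dim_vec w" "dim_col (col_mat w) = 1"
  by (simp_all add: col_mat_def)

lemma outer_eq_col_mat: "outer w = col_mat w * ctrans (col_mat w)"
  by (rule eq_matI) (auto simp: outer_def col_mat_def scalar_prod_def)

lemma col_mat_mult_mat_vec:
  "A \<in> carrier_mat r n \<Longrightarrow> v \<in> carrier_vec n \<Longrightarrow> col_mat (A *\<^sub>v v) = A * col_mat v"
  by (rule eq_matI) (auto simp: col_mat_def scalar_prod_def)

lemma outer_mult_mat_vec:
  assumes "A \<in> carrier_mat r n" "v \<in> carrier_vec n"
  shows "outer (A *\<^sub>v v) = A * outer v * ctrans A"
  using assms by (simp add: outer_eq_col_mat col_mat_mult_mat_vec ctrans_mult assoc_mult_mat_dims)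

lemma outer_carrier: "v \<in> carrier_vec n \<Longrightarrow> outer v \<in> carrier_mat n n"
  by (simp add: outer_def)

lemma msum_carrier [simp]: "msum r c f I \<in> carrier_mat r c"
  by (simp add: msum_def)

lemma msum_cong: "(\<And>i. i \<in> I \<Longrightarrow> f i = g i) \<Longrightarrow> msum r c f I = msum r c g I"
  unfolding msum_def by (rule eq_matI) auto

lemma msum_empty [simp]: "msum r c f {} = 0\<^sub>m r c"
  by (rule eq_matI) (auto simp: msum_def)

lemma msum_insert:
  "finite I \<Longrightarrow> i \<notin> I \<Longrightarrow> f i \<in> carrier_mat r c \<Longrightarrow> msum r c f (insert i I) = f i + msum r c f I"
  by (rule eq_matI) (auto simp: msum_def)

lemma mult_add_sandwich:
  fixes E :: "'a :: semiring_0 mat"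
  assumes E: "E \<in> carrier_mat m n" and A: "A \<in> carrier_mat n n" and B: "B \<in> carrier_mat n n"
    and D: "D \<in> carrier_mat n m'"
  shows "E * (A + B) * D = E * A * D + E * B * D"
  by (simp add: mult_add_distrib_mat[OF E A B]
      add_mult_distrib_mat[OF mult_carrier_mat[OF E A] mult_carrier_mat[OF E B] D])

lemma mult_smult_sandwich:
  fixes E :: "'a :: comm_ring mat"
  assumes E: "E \<in> carrier_mat m n" and A: "A \<in> carrier_mat n n" and D: "D \<in> carrier_mat n m'"
  shows "E * (c \<cdot>\<^sub>m A) * D = c \<cdot>\<^sub>m (E * A * D)"
  by (simp add: mult_smult_distrib[OF E A] mult_smult_assoc_mat[OF mult_carrier_mat[OF E A] D])

lemma msum_sandwich:
  assumes "finite I" "\<And>i. i \<in> I \<Longrightarrow> X i \<in> carrier_mat n n"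
    and E: "E \<in> carrier_mat m n" and D: "D \<in> carrier_mat n m'"
  shows "msum m m' (\<lambda>i. c i \<cdot>\<^sub>m (E * X i * D)) I = E * msum n n (\<lambda>i. c i \<cdot>\<^sub>m X i) I * D"
  using assms(1,2)
proof (induction I rule: finite_induct)
  case empty
  show ?case
    using E D by simp
next
  case (insert i I)
  have X: "X i \<in> carrier_mat n n"
    using insert.prems by simp
  then have "c i \<cdot>\<^sub>m (E * X i * D) \<in> carrier_mat m m'"
    using E D by auto
  then have "msum m m' (\<lambda>i. c i \<cdot>\<^sub>m (E * X i * D)) (insert i I)
      = c i \<cdot>\<^sub>m (E * X i * D) + E * msum n n (\<lambda>i. c i \<cdot>\<^sub>m X i) I * D"
    using insert by (simp add: msum_insert)
  also have "\<dots> = E * (c i \<cdot>\<^sub>m X i + msum n n (\<lambda>i. c i \<cdot>\<^sub>m X i) I) * D"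
    using X E D by (simp add: mult_add_sandwich mult_smult_sandwich)
  also have "c i \<cdot>\<^sub>m X i + msum n n (\<lambda>i. c i \<cdot>\<^sub>m X i) I
      = msum n n (\<lambda>i. c i \<cdot>\<^sub>m X i) (insert i I)"
    using insert X by (simp add: msum_insert)
  finally show ?case .
qed

lemma invertible_matE:
  assumes A: "A \<in> carrier_mat n n" and "invertible_mat A"
  obtains B where "B \<in> carrier_mat n n" "A * B = 1\<^sub>m n" "B * A = 1\<^sub>m n"
proof -
  obtain B where AB: "A * B = 1\<^sub>m n" and BA: "B * A = 1\<^sub>m (dim_row B)"
    using assms unfolding invertible_mat_def inverts_mat_def by auto
  have "B \<in> carrier_mat n n"
    using arg_cong[OF AB, of dim_col] arg_cong[OF BA, of dim_col] A by (auto intro: carrier_matI)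
  with AB BA that show thesis by auto
qed

lemma minv_inverse:
  assumes A: "A \<in> carrier_mat n n" and "det A \<noteq> 0"
  shows "minv A \<in> carrier_mat n n" "A * minv A = 1\<^sub>m n" "minv A * A = 1\<^sub>m n"
proof -
  have "A \<in> Units (ring_mat TYPE(complex) n undefined)"
    by (rule det_non_zero_imp_unit[OF assms])
  then obtain B where "mat_inverse A = Some B"
    using mat_inverse(1)[OF A, where b = undefined] by (cases "mat_inverse A") auto
  then show "minv A \<in> carrier_mat n n" "A * minv A = 1\<^sub>m n" "minv A * A = 1\<^sub>m n"
    using mat_inverse(2)[OF A] by (simp_all add: minv_def)
qed

lemma minv_eqI:
  assumes A: "A \<in> carrier_mat n n" and B: "B \<in> carrier_mat n n" and AB: "A * B = 1\<^sub>m n"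
  shows "minv A = B"
proof -
  have "det A \<noteq> 0"
    using det_mult[OF A B] AB by auto
  note inv = minv_inverse[OF A this]
  have "minv A = minv A * (A * B)"
    using inv(1) by (simp add: AB)
  also have "\<dots> = B"
    using inv A B by (simp flip: assoc_mult_mat_dims)
  finally show ?thesis .
qed

lemma minv_singular:
  assumes A: "A \<in> carrier_mat n n" and "det A = 0"
  shows "minv A = 0\<^sub>m n n"
proof (cases "mat_inverse A")
  case (Some B)
  then have "det A * det B = 1"
    using mat_inverse(2)[OF A] det_mult[OF A] by (metis det_one)
  with assms show ?thesis by simp
qed (use A in \<open>simp add: minv_def\<close>)

lemma minv_carrier: "A \<in> carrier_mat n n \<Longrightarrow> minv A \<in> carrier_mat n n"
  by (cases "det A = 0") (simp_all add: minv_singular minv_inverse(1))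

(* This includes singular C: then both sides are the junk value 0 of minv. *)
lemma minv_congruence:
  assumes C: "C \<in> carrier_mat n n" and D: "D \<in> carrier_mat n n" and Di: "Di \<in> carrier_mat n n"
    and DDi: "D * Di = 1\<^sub>m n"
  shows "minv (ctrans D * C * D) = Di * minv C * ctrans Di"
proof (cases "det C = 0")
  case True
  have DCD: "ctrans D * C * D \<in> carrier_mat n n"
    using C D by auto
  have "det (ctrans D * C * D) = 0"
    using C D True by (simp add: det_mult[OF mult_carrier_mat[OF ctrans_carrier[OF D] C] D]
        det_mult[OF ctrans_carrier[OF D] C])
  with C Di True show ?thesis
    by (simp add: minv_singular minv_singular[OF DCD])
next
  case False
  note C_inv = minv_inverse[OF C False]
  have DiD: "Di * D = 1\<^sub>m n"
    by (rule mat_mult_left_right_inverse[OF D Di DDi])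
  have "ctrans D * C * D * (Di * minv C * ctrans Di) = ctrans D * (C * (D * Di) * minv C) * ctrans Di"
    using C D Di C_inv by (simp add: assoc_mult_mat_dims)
  also have "\<dots> = ctrans (Di * D)"
    using C D Di C_inv by (simp add: DDi ctrans_mult)
  finally have "ctrans D * C * D * (Di * minv C * ctrans Di) = 1\<^sub>m n"
    by (simp add: DiD)
  then show ?thesis
    using C D Di C_inv by (intro minv_eqI) auto
qed

lemma quadratic_form_minv_congruence:
  assumes C: "C \<in> carrier_mat n n" and D: "D \<in> carrier_mat n n" and "invertible_mat D"
    and g: "g \<in> carrier_vec n"
  shows "conjugate (ctrans D *\<^sub>v g) \<bullet> (minv (ctrans D * C * D) *\<^sub>v (ctrans D *\<^sub>v g))
    = conjugate g \<bullet> (minv C *\<^sub>v g)"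
proof -
  obtain Di where Di: "Di \<in> carrier_mat n n" and DDi: "D * Di = 1\<^sub>m n"
    using invertible_matE[OF D \<open>invertible_mat D\<close>] by blast
  have Cg: "minv C *\<^sub>v g \<in> carrier_vec n"
    using minv_carrier[OF C] g by simp
  have "ctrans Di * ctrans D = 1\<^sub>m n"
    using D Di by (simp flip: ctrans_mult add: DDi)
  then have "ctrans Di *\<^sub>v (ctrans D *\<^sub>v g) = g"
    using D Di g by (simp flip: assoc_mult_mat_vec_dims)
  then have "conjugate (ctrans D *\<^sub>v g) \<bullet> (minv (ctrans D * C * D) *\<^sub>v (ctrans D *\<^sub>v g))
    = conjugate (ctrans D *\<^sub>v g) \<bullet> (Di *\<^sub>v (minv C *\<^sub>v g))"
    using minv_carrier[OF C] D Di g by (simp add: minv_congruence[OF C D Di DDi] assoc_mult_mat_vec_dims)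
  also have "\<dots> = conjugate g \<bullet> (D *\<^sub>v (Di *\<^sub>v (minv C *\<^sub>v g)))"
    using D Di g Cg by (simp add: scalar_prod_conjugate_mult_mat_vec[of "ctrans D" n n])
  also have "\<dots> = conjugate g \<bullet> (minv C *\<^sub>v g)"
    using assoc_mult_mat_vec[OF D Di Cg] Cg by (simp add: DDi)
  finally show ?thesis .
qed

definition blkdiag :: "nat list \<Rightarrow> nat \<Rightarrow> (nat \<Rightarrow> 'a :: zero mat) \<Rightarrow> 'a mat" where
  "blkdiag fs L B = mat (length fs * L) (length fs * L)
     (\<lambda>(a, b). if a div L = b div L then B (fs ! (a div L)) $$ (a mod L, b mod L) else 0)"

definition stack :: "nat list \<Rightarrow> nat \<Rightarrow> (nat \<Rightarrow> 'a vec) \<Rightarrow> 'a vec" where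
  "stack fs L v = vec (length fs * L) (\<lambda>j. v (fs ! (j div L)) $ (j mod L))"

lemma blkdiag_carrier [simp]: "blkdiag fs L B \<in> carrier_mat (length fs * L) (length fs * L)"
  and blkdiag_dims [simp]:
    "dim_row (blkdiag fs L B) = length fs * L" "dim_col (blkdiag fs L B) = length fs * L"
  by (simp_all add: blkdiag_def)

lemma stack_carrier [simp]: "stack fs L v \<in> carrier_vec (length fs * L)"
  and dim_stack [simp]: "dim_vec (stack fs L v) = length fs * L"
  by (simp_all add: stack_def)

lemma block_index:
  fixes a n L :: nat
  assumes "a < n * L"
  shows "a div L < n" "a mod L < L"
proof -
  have "L > 0"
    using assms by (cases L) auto
  with assms show "a div L < n" "a mod L < L"
    by (simp_all add: div_less_iff_less_mult mult.commute)
qed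

lemma sum_block:
  fixes f :: "nat \<Rightarrow> 'a :: comm_monoid_add"
  assumes "q < n"
  shows "(\<Sum>c\<in>{0..<n * L}. if c div L = q then f c else 0) = (\<Sum>t<L. f (q * L + t))"
proof -
  have "{c \<in> {0..<n * L}. c div L = q} = (\<lambda>t. q * L + t) ` {..<L}"
  proof (rule subset_antisym; rule subsetI)
    fix c
    assume c: "c \<in> {c \<in> {0..<n * L}. c div L = q}"
    then have "c = q * L + c mod L" "c mod L < L"
      using block_index(2)[of c n L] by (auto simp: mult.commute)
    then show "c \<in> (\<lambda>t. q * L + t) ` {..<L}"
      by blast
  next
    fix c
    assume "c \<in> (\<lambda>t. q * L + t) ` {..<L}"
    then obtain t where t: "t < L" "c = q * L + t"
      by blast
    have "q * L + t < (q + 1) * L"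
      using t by simp
    also have "\<dots> \<le> n * L"
      using assms by (intro mult_right_mono) auto
    finally show "c \<in> {c \<in> {0..<n * L}. c div L = q}"
      using t by auto
  qed
  then show ?thesis
    by (simp add: sum.inter_filter[symmetric] sum.reindex inj_on_def)
qed

lemma blkdiag_cong: "(\<And>m. m \<in> set fs \<Longrightarrow> A m = B m) \<Longrightarrow> blkdiag fs L A = blkdiag fs L B"
  unfolding blkdiag_def by (rule eq_matI) (auto dest: block_index)

lemma stack_cong: "(\<And>m. m \<in> set fs \<Longrightarrow> v m = w m) \<Longrightarrow> stack fs L v = stack fs L w"
  unfolding stack_def by (rule eq_vecI) (auto dest: block_index)

lemma blkdiag_mult:
  fixes A B :: "nat \<Rightarrow> 'a :: semiring_0 mat"
  assumes "\<And>m. m \<in> set fs \<Longrightarrow> A m \<in> carrier_mat L L" "\<And>m. m \<in> set fs \<Longrightarrow> B m \<in> carrier_mat L L"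
  shows "blkdiag fs L A * blkdiag fs L B = blkdiag fs L (\<lambda>m. A m * B m)"
proof (rule eq_matI)
  fix a b
  assume "a < dim_row (blkdiag fs L (\<lambda>m. A m * B m))" "b < dim_col (blkdiag fs L (\<lambda>m. A m * B m))"
  then have a: "a < length fs * L" and b: "b < length fs * L"
    by simp_all
  let ?m = "fs ! (a div L)"
  have m: "?m \<in> set fs"
    using block_index(1)[OF a] by simp
  have "(blkdiag fs L A * blkdiag fs L B) $$ (a, b) = (\<Sum>c\<in>{0..<length fs * L}. if c div L = a div L
      then A ?m $$ (a mod L, c mod L) * (if a div L = b div L then B ?m $$ (c mod L, b mod L) else 0) else 0)"
    using a b by (auto simp: blkdiag_def scalar_prod_def intro!: sum.cong)
  also have "\<dots> = (\<Sum>t<L. A ?m $$ (a mod L, t) * (if a div L = b div L then B ?m $$ (t, b mod L) else 0))"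
    using block_index[OF a] by (subst sum_block) (auto intro!: sum.cong)
  also have "\<dots> = blkdiag fs L (\<lambda>m. A m * B m) $$ (a, b)"
    using a b block_index[OF a] block_index[OF b] assms[OF m]
    by (auto simp: blkdiag_def scalar_prod_def atLeast0LessThan)
  finally show "(blkdiag fs L A * blkdiag fs L B) $$ (a, b) = blkdiag fs L (\<lambda>m. A m * B m) $$ (a, b)" .
qed simp_all

lemma blkdiag_mult_stack:
  fixes A :: "nat \<Rightarrow> 'a :: semiring_0 mat"
  assumes "\<And>m. m \<in> set fs \<Longrightarrow> A m \<in> carrier_mat L L" "\<And>m. m \<in> set fs \<Longrightarrow> v m \<in> carrier_vec L"
  shows "blkdiag fs L A *\<^sub>v stack fs L v = stack fs L (\<lambda>m. A m *\<^sub>v v m)"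
proof (rule eq_vecI)
  fix a
  assume "a < dim_vec (stack fs L (\<lambda>m. A m *\<^sub>v v m))"
  then have a: "a < length fs * L"
    by simp
  let ?m = "fs ! (a div L)"
  have m: "?m \<in> set fs"
    using block_index(1)[OF a] by simp
  have "(blkdiag fs L A *\<^sub>v stack fs L v) $ a = (\<Sum>c\<in>{0..<length fs * L}. if c div L = a div L
      then A ?m $$ (a mod L, c mod L) * v ?m $ (c mod L) else 0)"
    using a by (auto simp: blkdiag_def stack_def scalar_prod_def intro!: sum.cong)
  also have "\<dots> = (\<Sum>t<L. A ?m $$ (a mod L, t) * v ?m $ t)"
    using block_index[OF a] by (subst sum_block) (auto intro!: sum.cong)
  also have "\<dots> = stack fs L (\<lambda>m. A m *\<^sub>v v m) $ a"
    using a block_index[OF a] assms[OF m] by (auto simp: stack_def scalar_prod_def atLeast0LessThan)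
  finally show "(blkdiag fs L A *\<^sub>v stack fs L v) $ a = stack fs L (\<lambda>m. A m *\<^sub>v v m) $ a" .
qed simp

lemma ctrans_blkdiag:
  assumes "\<And>m. m \<in> set fs \<Longrightarrow> A m \<in> carrier_mat L L"
  shows "ctrans (blkdiag fs L A) = blkdiag fs L (\<lambda>m. ctrans (A m))"
proof (rule eq_matI)
  fix a b
  assume "a < dim_row (blkdiag fs L (\<lambda>m. ctrans (A m)))" "b < dim_col (blkdiag fs L (\<lambda>m. ctrans (A m)))"
  then have a: "a < length fs * L" and b: "b < length fs * L"
    by simp_all
  have "A (fs ! (b div L)) \<in> carrier_mat L L"
    using assms block_index(1)[OF b] by simp
  then show "ctrans (blkdiag fs L A) $$ (a, b) = blkdiag fs L (\<lambda>m. ctrans (A m)) $$ (a, b)"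
    using a b block_index[OF a] block_index[OF b] by (auto simp: blkdiag_def)
qed simp_all

lemma blkdiag_one: "blkdiag fs L (\<lambda>m. 1\<^sub>m L) = 1\<^sub>m (length fs * L)"
proof (rule eq_matI)
  fix a b
  assume "a < dim_row (1\<^sub>m (length fs * L))" "b < dim_col (1\<^sub>m (length fs * L))"
  then have a: "a < length fs * L" and b: "b < length fs * L"
    by simp_all
  have "(a div L = b div L \<and> a mod L = b mod L) = (a = b)"
    by (metis div_mult_mod_eq)
  then show "blkdiag fs L (\<lambda>m. 1\<^sub>m L) $$ (a, b) = 1\<^sub>m (length fs * L) $$ (a, b)"
    using a b block_index[OF a] block_index[OF b] by (auto simp: blkdiag_def)
qed simp_all

lemma invertible_blkdiag:
  fixes A :: "nat \<Rightarrow> 'a :: semiring_1 mat"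
  assumes "\<And>m. m \<in> set fs \<Longrightarrow> A m \<in> carrier_mat L L \<and> invertible_mat (A m)"
  shows "invertible_mat (blkdiag fs L A)"
proof -
  have "\<forall>m \<in> set fs. \<exists>B. B \<in> carrier_mat L L \<and> A m * B = 1\<^sub>m L \<and> B * A m = 1\<^sub>m L"
    using assms invertible_matE by metis
  then obtain B where
    B: "\<And>m. m \<in> set fs \<Longrightarrow> B m \<in> carrier_mat L L \<and> A m * B m = 1\<^sub>m L \<and> B m * A m = 1\<^sub>m L"
    by (metis bchoice)
  have "blkdiag fs L A * blkdiag fs L B = blkdiag fs L (\<lambda>m. 1\<^sub>m L)"
    "blkdiag fs L B * blkdiag fs L A = blkdiag fs L (\<lambda>m. 1\<^sub>m L)"
    using assms B by (simp_all add: blkdiag_mult cong: blkdiag_cong)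
  then show ?thesis
    unfolding invertible_mat_def inverts_mat_def blkdiag_one by auto
qed

lemma set_serving: "set (serving M Us k) = {m. m < M \<and> k \<in> Us m}"
  by (simp add: serving_def)

lemma gbar_eq_stack:
  "gbar M L Us W h k i = stack (serving M Us k) L (\<lambda>m. if i \<in> Us m then geff W h m i else 0\<^sub>v L)"
  unfolding gbar_def stack_def Let_def by (rule eq_vecI) (auto dest: block_index)

lemma gstack_eq_gbar: "gstack M L Us W h k = gbar M L Us W h k k"
  unfolding gstack_def gbar_def Let_def
  by (rule eq_vecI) (auto simp: set_serving dest!: block_index(1) nth_mem)

lemma sigma_k_eq_blkdiag:
  "sigma_k M K L Us W R p \<sigma>2 k = blkdiag (serving M Us k) L (sigblk K L Us W R p \<sigma>2)"
  by (simp add: sigma_k_def blkdiag_def Let_def)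

lemma geff_carrier:
  "W m \<in> carrier_mat N L \<Longrightarrow> h m i \<in> carrier_vec N \<Longrightarrow> geff W h m i \<in> carrier_vec L"
  by (auto simp: geff_def intro: mult_mat_vec_carrier)

lemma geff_mult_right:
  "W m \<in> carrier_mat N L \<Longrightarrow> Q m \<in> carrier_mat L L \<Longrightarrow> h m i \<in> carrier_vec N
    \<Longrightarrow> geff (\<lambda>m. W m * Q m) h m i = ctrans (Q m) *\<^sub>v geff W h m i"
  by (simp add: geff_def ctrans_mult assoc_mult_mat_vec_dims)

lemma sigblk_carrier: "W m \<in> carrier_mat N L \<Longrightarrow> sigblk K L Us W R p \<sigma>2 m \<in> carrier_mat L L"
  by (auto simp: sigblk_def)

lemma sigblk_mult_right:
  assumes W: "W m \<in> carrier_mat N L" and Q: "Q m \<in> carrier_mat L L"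
    and R: "\<And>i. i < K \<Longrightarrow> R m i \<in> carrier_mat N N"
  shows "sigblk K L Us (\<lambda>m. W m * Q m) R p \<sigma>2 m = ctrans (Q m) * sigblk K L Us W R p \<sigma>2 m * Q m"
proof -
  let ?S = "{i. i < K \<and> i \<notin> Us m}"
  let ?WQ = "W m * Q m"
  have "msum L L (\<lambda>i. complex_of_real (p i) \<cdot>\<^sub>m (ctrans ?WQ * R m i * ?WQ)) ?S
      = msum L L (\<lambda>i. complex_of_real (p i) \<cdot>\<^sub>m (ctrans (Q m) * (ctrans (W m) * R m i * W m) * Q m)) ?S"
    using R by (intro msum_cong) (simp add: ctrans_mult_sandwich[OF W Q])
  also have "\<dots>
      = ctrans (Q m) * msum L L (\<lambda>i. complex_of_real (p i) \<cdot>\<^sub>m (ctrans (W m) * R m i * W m)) ?S * Q m"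
    using W Q R by (intro msum_sandwich) auto
  finally have interference: "msum L L (\<lambda>i. complex_of_real (p i) \<cdot>\<^sub>m (ctrans ?WQ * R m i * ?WQ)) ?S
      = ctrans (Q m) * msum L L (\<lambda>i. complex_of_real (p i) \<cdot>\<^sub>m (ctrans (W m) * R m i * W m)) ?S * Q m" .
  have "ctrans ?WQ * ?WQ = ctrans ?WQ * 1\<^sub>m N * ?WQ"
    using W Q by simp
  also have "\<dots> = ctrans (Q m) * (ctrans (W m) * W m) * Q m"
    using ctrans_mult_sandwich[OF W Q, of "1\<^sub>m N"] W by simp
  finally have noise: "complex_of_real \<sigma>2 \<cdot>\<^sub>m (ctrans ?WQ * ?WQ)
      = ctrans (Q m) * (complex_of_real \<sigma>2 \<cdot>\<^sub>m (ctrans (W m) * W m)) * Q m"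
    by (simp add:
        mult_smult_sandwich[OF ctrans_carrier[OF Q] mult_carrier_mat[OF ctrans_carrier[OF W] W] Q])
  show ?thesis
    using W Q by (simp add: sigblk_def interference noise mult_add_sandwich[OF ctrans_carrier[OF Q]
          msum_carrier smult_carrier_mat[OF mult_carrier_mat[OF ctrans_carrier[OF W] W]] Q])
qed

context
  fixes M K N L :: nat and Us :: "nat \<Rightarrow> nat set" and h :: "nat \<Rightarrow> nat \<Rightarrow> complex vec"
    and R :: "nat \<Rightarrow> nat \<Rightarrow> complex mat" and W Q :: "nat \<Rightarrow> complex mat"
  assumes W: "\<And>m. m < M \<Longrightarrow> W m \<in> carrier_mat N L"
    and Q: "\<And>m. m < M \<Longrightarrow> Q m \<in> carrier_mat L L"
    and h: "\<And>m i. m < M \<Longrightarrow> i < K \<Longrightarrow> h m i \<in> carrier_vec N"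
    and R: "\<And>m i. m < M \<Longrightarrow> i < K \<Longrightarrow> R m i \<in> carrier_mat N N"
begin

lemma serving_carriers:
  assumes "m \<in> set (serving M Us k)"
  shows "W m \<in> carrier_mat N L" "Q m \<in> carrier_mat L L" "ctrans (Q m) \<in> carrier_mat L L"
    "sigblk K L Us W R p \<sigma>2 m \<in> carrier_mat L L"
  using assms W Q by (auto simp: set_serving intro: sigblk_carrier)

lemma ctrans_blkdiag_serving:
  "ctrans (blkdiag (serving M Us k) L Q) = blkdiag (serving M Us k) L (\<lambda>m. ctrans (Q m))"
  using serving_carriers by (intro ctrans_blkdiag)

lemma gbar_mult_right:
  assumes "i < K"
  shows "gbar M L Us (\<lambda>m. W m * Q m) h k i
    = ctrans (blkdiag (serving M Us k) L Q) *\<^sub>v gbar M L Us W h k i"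
proof -
  have "gbar M L Us (\<lambda>m. W m * Q m) h k i
      = stack (serving M Us k) L (\<lambda>m. ctrans (Q m) *\<^sub>v (if i \<in> Us m then geff W h m i else 0\<^sub>v L))"
    unfolding gbar_eq_stack
  proof (rule stack_cong)
    fix m
    assume m: "m \<in> set (serving M Us k)"
    then have "h m i \<in> carrier_vec N"
      using h assms by (simp add: set_serving)
    with serving_carriers[OF m] show "(if i \<in> Us m then geff (\<lambda>m. W m * Q m) h m i else 0\<^sub>v L)
        = ctrans (Q m) *\<^sub>v (if i \<in> Us m then geff W h m i else 0\<^sub>v L)"
      by (auto simp: geff_mult_right)
  qed
  also have "\<dots> = ctrans (blkdiag (serving M Us k) L Q) *\<^sub>v gbar M L Us W h k i"
    unfolding gbar_eq_stack ctrans_blkdiag_serving using serving_carriers h assms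
    by (intro blkdiag_mult_stack[symmetric]) (auto simp: set_serving geff_carrier[where N = N])
  finally show ?thesis .
qed

lemma sigma_k_mult_right:
  "sigma_k M K L Us (\<lambda>m. W m * Q m) R p \<sigma>2 k
    = ctrans (blkdiag (serving M Us k) L Q) * sigma_k M K L Us W R p \<sigma>2 k
      * blkdiag (serving M Us k) L Q"
proof -
  let ?fs = "serving M Us k" and ?S = "sigblk K L Us W R p \<sigma>2"
  have "sigma_k M K L Us (\<lambda>m. W m * Q m) R p \<sigma>2 k = blkdiag ?fs L (\<lambda>m. ctrans (Q m) * ?S m * Q m)"
    unfolding sigma_k_eq_blkdiag
    by (intro blkdiag_cong) (simp add: set_serving sigblk_mult_right[where N = N] W Q R)
  also have "\<dots> = blkdiag ?fs L (\<lambda>m. ctrans (Q m) * ?S m) * blkdiag ?fs L Q"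
    using serving_carriers by (intro blkdiag_mult[symmetric]) (auto intro: mult_carrier_mat[of _ L L])
  also have "blkdiag ?fs L (\<lambda>m. ctrans (Q m) * ?S m)
      = blkdiag ?fs L (\<lambda>m. ctrans (Q m)) * blkdiag ?fs L ?S"
    using serving_carriers by (intro blkdiag_mult[symmetric])
  finally show ?thesis
    unfolding sigma_k_eq_blkdiag ctrans_blkdiag_serving .
qed

lemma SINR_mult_right_invertible:
  assumes Q_inv: "\<And>m. m < M \<Longrightarrow> invertible_mat (Q m)" and k: "k < K"
  shows "SINR M K L Us h R p \<sigma>2 (\<lambda>m. W m * Q m) k = SINR M K L Us h R p \<sigma>2 W k"
proof -
  let ?fs = "serving M Us k" and ?I = "{i. i < K \<and> i \<noteq> k}"
  let ?gbar = "gbar M L Us W h k" and ?gbar' = "gbar M L Us (\<lambda>m. W m * Q m) h k"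
  define n where "n = length ?fs * L"
  define D where "D = blkdiag ?fs L Q"
  define P where "P = msum n n (\<lambda>i. complex_of_real (p i) \<cdot>\<^sub>m outer (?gbar i)) ?I"
  define S where "S = sigma_k M K L Us W R p \<sigma>2 k"
  define g where "g = gstack M L Us W h k"
  have D: "D \<in> carrier_mat n n" and "invertible_mat D"
    using serving_carriers Q_inv by (auto simp: D_def n_def set_serving intro!: invertible_blkdiag)
  have gbar: "?gbar i \<in> carrier_vec n" for i
    by (simp add: gbar_eq_stack n_def)
  have g: "g \<in> carrier_vec n"
    by (simp add: g_def gstack_eq_gbar gbar)
  have P: "P \<in> carrier_mat n n" and S: "S \<in> carrier_mat n n"
    by (simp_all add: P_def S_def sigma_k_eq_blkdiag n_def)
  have "msum n n (\<lambda>i. complex_of_real (p i) \<cdot>\<^sub>m outer (?gbar' i)) ?I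
      = msum n n (\<lambda>i. complex_of_real (p i) \<cdot>\<^sub>m (ctrans D * outer (?gbar i) * D)) ?I"
    using D gbar by (intro msum_cong)
      (simp add: gbar_mult_right outer_mult_mat_vec[OF ctrans_carrier[OF D] gbar] flip: D_def)
  also have "\<dots> = ctrans D * P * D"
    unfolding P_def using D gbar by (intro msum_sandwich) (auto simp: outer_carrier)
  finally have "msum n n (\<lambda>i. complex_of_real (p i) \<cdot>\<^sub>m outer (?gbar' i)) ?I
      + sigma_k M K L Us (\<lambda>m. W m * Q m) R p \<sigma>2 k = ctrans D * (P + S) * D"
    by (simp add: sigma_k_mult_right mult_add_sandwich[OF ctrans_carrier[OF D] P S D] flip: D_def S_def)
  moreover have "gstack M L Us (\<lambda>m. W m * Q m) h k = ctrans D *\<^sub>v g"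
    using k by (simp add: g_def gstack_eq_gbar gbar_mult_right D_def)
  ultimately have "SINR M K L Us h R p \<sigma>2 (\<lambda>m. W m * Q m) k
      = conjugate (ctrans D *\<^sub>v g) \<bullet> (minv (ctrans D * (P + S) * D) *\<^sub>v (ctrans D *\<^sub>v g))"
    using D by (simp add: SINR_def Let_def)
  also have "\<dots> = conjugate g \<bullet> (minv (P + S) *\<^sub>v g)"
    using P S D \<open>invertible_mat D\<close> g by (intro quadratic_form_minv_congruence) auto
  also have "\<dots> = SINR M K L Us h R p \<sigma>2 W k"
    using g by (simp add: SINR_def Let_def P_def S_def g_def)
  finally show ?thesis .
qed

end

lemma full_col_rank_mult_invertible:
  assumes U: "U \<in> carrier_mat N L" and V: "V \<in> carrier_mat L N" and VU: "V * U = 1\<^sub>m L"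
    and Q: "Q \<in> carrier_mat L L" and "invertible_mat Q"
  shows "full_col_rank (U * Q)"
  unfolding full_col_rank_def
proof (intro ballI impI)
  fix v
  assume "v \<in> carrier_vec (dim_col (U * Q))" and "U * Q *\<^sub>v v = 0\<^sub>v (dim_row (U * Q))"
  then have v: "v \<in> carrier_vec L" and UQv: "U *\<^sub>v (Q *\<^sub>v v) = 0\<^sub>v N"
    using U Q by auto
  obtain Qi where Qi: "Qi \<in> carrier_mat L L" "Qi * Q = 1\<^sub>m L"
    using invertible_matE[OF Q \<open>invertible_mat Q\<close>] by blast
  have "v = Qi *\<^sub>v (Q *\<^sub>v v)"
    using assoc_mult_mat_vec[OF Qi(1) Q v] Qi(2) v by simp
  also have "\<dots> = Qi *\<^sub>v ((V * U) *\<^sub>v (Q *\<^sub>v v))"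
    using Q v by (simp add: VU)
  also have "\<dots> = Qi *\<^sub>v (V *\<^sub>v (U *\<^sub>v (Q *\<^sub>v v)))"
    using U V Q v by simp
  also have "\<dots> = 0\<^sub>v L"
    using Qi V by (simp add: UQv)
  finally show "v = 0\<^sub>v (dim_col (U * Q))"
    using Q by simp
qed

theorem proposition1:
  fixes M K N L :: nat
    and Us :: "nat \<Rightarrow> nat set"
    and h :: "nat \<Rightarrow> nat \<Rightarrow> complex vec"
    and R :: "nat \<Rightarrow> nat \<Rightarrow> complex mat"
    and p :: "nat \<Rightarrow> real" and \<sigma>2 :: real
    and U Q :: "nat \<Rightarrow> complex mat"
    and k :: nat
  assumes "L \<le> N"
    and "\<And>i. i < K \<Longrightarrow> p i > 0"
    and "\<sigma>2 > 0"
    and "\<And>m. m < M \<Longrightarrow> Us m \<subseteq> {..<K}"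
    and "\<And>m i. m < M \<Longrightarrow> i < K \<Longrightarrow> h m i \<in> carrier_vec N"
    and "\<And>m i. m < M \<Longrightarrow> i < K \<Longrightarrow> herm_psd N (R m i)"
    and "\<And>m. m < M \<Longrightarrow> U m \<in> carrier_mat N L \<and> ctrans (U m) * U m = 1\<^sub>m L"
    and "\<And>m. m < M \<Longrightarrow> Q m \<in> carrier_mat L L \<and> invertible_mat (Q m)"
    and "k < K"
  shows "(\<forall>m < M. full_col_rank (U m * Q m))
    \<and> SINR M K L Us h R p \<sigma>2 (\<lambda>m. U m * Q m) k = SINR M K L Us h R p \<sigma>2 U k
    \<and> (\<forall>Q'. (\<forall>m < M. Q' m \<in> carrier_mat L L \<and> invertible_mat (Q' m)) \<longrightarrow>
         Re (SINR M K L Us h R p \<sigma>2 (\<lambda>m. U m * Q' m) k)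
           \<le> Re (SINR M K L Us h R p \<sigma>2 (\<lambda>m. U m * Q m) k))"
proof -
  have R: "R m i \<in> carrier_mat N N" if "m < M" "i < K" for m i
    using assms(6)[OF that] by (simp add: herm_psd_def)
  have invariance: "SINR M K L Us h R p \<sigma>2 (\<lambda>m. U m * Q' m) k = SINR M K L Us h R p \<sigma>2 U k"
    if "\<forall>m < M. Q' m \<in> carrier_mat L L \<and> invertible_mat (Q' m)" for Q'
    using that assms(5,7,9) R by (intro SINR_mult_right_invertible[where N = N]) auto
  have "\<forall>m < M. full_col_rank (U m * Q m)"
    using assms(7,8) by (blast intro: full_col_rank_mult_invertible[where V = "ctrans (U m)" for m])
  with invariance assms(8) show ?thesis
    by simp
qed

end
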